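(* The Petersen graph $P$ satisfies $\alpha_{\mathrm{od}}(P)=3$ and $\chi_{\mathrm{so}}(P)=6$. Moreover, every odd independent set of $P$ with at least two vertices equals the neighborhood $N(v)$ of some vertex $v$.
   Context: An odd independent set in $G=(V,E)$ is an independent set $S$ such that every $v\in V\setminus S$ has either no neighbor or an odd number of neighbors in $S$; $\alpha_{\mathrm{od}}(G)$ is its maximum size. A strong odd coloring is a proper coloring such that for each vertex $v$ every color on $N(v)$ occurs an odd number of times on $N(v)$; $\chi_{\mathrm{so}}(G)$ is the minimum number of colors. $N(v)$ is the open neighborhood. *)

theory Defs
  imports Main
begin

(* A simple graph is given by a vertex set V and a symmetric irreflexive
   adjacency relation E (only its restriction to V matters). *)

definition nbhd :: "'a set \<Rightarrow> ('a \<Rightarrow> 'a \<Rightarrow> bool) \<Rightarrow> 'a \<Rightarrow> 'a set" where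
  "nbhd V E v = {u \<in> V. E v u}"

definition independent_set :: "'a set \<Rightarrow> ('a \<Rightarrow> 'a \<Rightarrow> bool) \<Rightarrow> 'a set \<Rightarrow> bool" where
  "independent_set V E S \<longleftrightarrow> S \<subseteq> V \<and> (\<forall>u\<in>S. \<forall>v\<in>S. \<not> E u v)"

definition odd_independent_set :: "'a set \<Rightarrow> ('a \<Rightarrow> 'a \<Rightarrow> bool) \<Rightarrow> 'a set \<Rightarrow> bool" where
  "odd_independent_set V E S \<longleftrightarrow> independent_set V E S \<and>
     (\<forall>v \<in> V - S. card (nbhd V E v \<inter> S) = 0 \<or> odd (card (nbhd V E v \<inter> S)))"

definition alpha_od :: "'a set \<Rightarrow> ('a \<Rightarrow> 'a \<Rightarrow> bool) \<Rightarrow> nat" where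
  "alpha_od V E = Max (card ` {S. odd_independent_set V E S})"

definition proper_coloring :: "'a set \<Rightarrow> ('a \<Rightarrow> 'a \<Rightarrow> bool) \<Rightarrow> ('a \<Rightarrow> 'c) \<Rightarrow> 'c set \<Rightarrow> bool" where
  "proper_coloring V E f C \<longleftrightarrow> f ` V \<subseteq> C \<and> (\<forall>u\<in>V. \<forall>v\<in>V. E u v \<longrightarrow> f u \<noteq> f v)"

definition strong_odd_coloring :: "'a set \<Rightarrow> ('a \<Rightarrow> 'a \<Rightarrow> bool) \<Rightarrow> ('a \<Rightarrow> 'c) \<Rightarrow> 'c set \<Rightarrow> bool" where
  "strong_odd_coloring V E f C \<longleftrightarrow> proper_coloring V E f C \<and>
     (\<forall>v\<in>V. \<forall>c \<in> f ` nbhd V E v. odd (card {u \<in> nbhd V E v. f u = c}))"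

definition chi_so :: "'a set \<Rightarrow> ('a \<Rightarrow> 'a \<Rightarrow> bool) \<Rightarrow> nat" where
  "chi_so V E = (LEAST k. \<exists>f :: 'a \<Rightarrow> nat. strong_odd_coloring V E f {0..<k})"

(* Petersen graph: outer 5-cycle 0..4, inner pentagram 5..9, spokes i -- i+5 *)
definition petersen_V :: "nat set" where
  "petersen_V = {0..<10}"

definition petersen_edge0 :: "nat \<Rightarrow> nat \<Rightarrow> bool" where
  "petersen_edge0 u v \<longleftrightarrow>
     (u < 5 \<and> v < 5 \<and> v = (u + 1) mod 5) \<or>
     (5 \<le> u \<and> u < 10 \<and> 5 \<le> v \<and> v < 10 \<and> v - 5 = (u - 5 + 2) mod 5) \<or>
     (u < 5 \<and> v = u + 5)"

definition petersen_E :: "nat \<Rightarrow> nat \<Rightarrow> bool" where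
  "petersen_E u v \<longleftrightarrow> petersen_edge0 u v \<or> petersen_edge0 v u"

end

theory Submission
  imports Defs
begin

text \<open>
  The Petersen graph is cubic, triangle-free, and any two distinct non-adjacent vertices have a
  common neighbour. Let \<open>S\<close> be an odd independent set containing \<open>u \<noteq> w\<close>. A common neighbour
  \<open>x\<close> of \<open>u\<close> and \<open>w\<close> lies outside \<open>S\<close> and has at least two, hence (oddness) all three, of its
  neighbours in \<open>S\<close>; any further \<open>y \<in> S\<close> would share a neighbour with \<open>x\<close>, i.e. be adjacent to
  a vertex of \<open>S\<close>. So \<open>S = N(x)\<close>, which gives \<open>\<alpha>\<^sub>o\<^sub>d = 3\<close>.

  The color classes of a strong odd coloring are odd independent sets, hence singletons or
  neighbourhoods. Vertices with disjoint neighbourhoods are adjacent, so by triangle-freeness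
  at most two classes are neighbourhoods, and \<open>k\<close> colors cover at most \<open>k + 4\<close> vertices.
\<close>

definition diameter_le_two :: "'a set \<Rightarrow> ('a \<Rightarrow> 'a \<Rightarrow> bool) \<Rightarrow> bool" where
  "diameter_le_two V E \<longleftrightarrow>
     (\<forall>u\<in>V. \<forall>w\<in>V. u \<noteq> w \<and> \<not> E u w \<longrightarrow> nbhd V E u \<inter> nbhd V E w \<noteq> {})"

definition triangle_free :: "'a set \<Rightarrow> ('a \<Rightarrow> 'a \<Rightarrow> bool) \<Rightarrow> bool" where
  "triangle_free V E \<longleftrightarrow> (\<forall>u\<in>V. \<forall>v\<in>V. \<forall>w\<in>V. \<not> (E u v \<and> E v w \<and> E u w))"

lemma nbhd_subset: "nbhd V E v \<subseteq> V"
  by (auto simp: nbhd_def)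

lemma odd_independent_set_eq_nbhd:
  assumes "finite V" and "symp E" and degree: "\<forall>v\<in>V. card (nbhd V E v) \<le> 3"
    and diam: "diameter_le_two V E"
    and S: "odd_independent_set V E S" and "2 \<le> card S"
  shows "\<exists>x\<in>V. S = nbhd V E x"
proof -
  have "S \<subseteq> V" and indep: "\<And>u v. u \<in> S \<Longrightarrow> v \<in> S \<Longrightarrow> \<not> E u v"
    and odd: "\<And>v. v \<in> V - S \<Longrightarrow> card (nbhd V E v \<inter> S) = 0 \<or> odd (card (nbhd V E v \<inter> S))"
    using S by (auto simp: odd_independent_set_def independent_set_def)
  obtain T where "T \<subseteq> S" "card T = 2"
    using obtain_subset_with_card_n[OF \<open>2 \<le> card S\<close>] by blast
  then obtain u w where "u \<in> S" "w \<in> S" "u \<noteq> w"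
    by (auto simp: card_2_iff)
  then have "nbhd V E u \<inter> nbhd V E w \<noteq> {}"
    using diam \<open>S \<subseteq> V\<close> indep unfolding diameter_le_two_def by blast
  then obtain x where "x \<in> V" "E u x" "E w x"
    by (auto simp: nbhd_def)
  have "x \<notin> S"
    using \<open>E u x\<close> \<open>u \<in> S\<close> indep by blast
  have fin: "finite (nbhd V E x)"
    using \<open>finite V\<close> nbhd_subset finite_subset by metis
  have "{u, w} \<subseteq> nbhd V E x \<inter> S"
    using \<open>E u x\<close> \<open>E w x\<close> \<open>u \<in> S\<close> \<open>w \<in> S\<close> \<open>S \<subseteq> V\<close> sympD[OF \<open>symp E\<close>]
    unfolding nbhd_def by blast
  then have "2 \<le> card (nbhd V E x \<inter> S)"
    using \<open>u \<noteq> w\<close> fin card_mono[of "nbhd V E x \<inter> S" "{u, w}"] by simp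
  moreover have "card (nbhd V E x \<inter> S) \<le> card (nbhd V E x)"
    using fin by (simp add: card_mono)
  moreover have "card (nbhd V E x) \<le> 3"
    using degree \<open>x \<in> V\<close> by blast
  moreover have "card (nbhd V E x \<inter> S) = 0 \<or> odd (card (nbhd V E x \<inter> S))"
    using odd \<open>x \<in> V\<close> \<open>x \<notin> S\<close> by blast
  ultimately have "card (nbhd V E x \<inter> S) = card (nbhd V E x)"
    by (auto elim: oddE)
  then have N_sub: "nbhd V E x \<subseteq> S"
    using fin card_subset_eq[of "nbhd V E x" "nbhd V E x \<inter> S"] by blast
  have "S \<subseteq> nbhd V E x"
  proof
    fix y assume "y \<in> S"
    show "y \<in> nbhd V E x"
    proof (rule ccontr)
      assume "y \<notin> nbhd V E x"
      then have "x \<noteq> y" "\<not> E x y"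
        using \<open>x \<notin> S\<close> \<open>y \<in> S\<close> \<open>S \<subseteq> V\<close> unfolding nbhd_def by blast+
      then have "nbhd V E x \<inter> nbhd V E y \<noteq> {}"
        using diam \<open>x \<in> V\<close> \<open>y \<in> S\<close> \<open>S \<subseteq> V\<close> unfolding diameter_le_two_def by blast
      then obtain a where "a \<in> nbhd V E x" "E y a"
        by (auto simp: nbhd_def)
      then show False
        using N_sub indep \<open>y \<in> S\<close> by blast
    qed
  qed
  with N_sub \<open>x \<in> V\<close> show ?thesis
    by blast
qed

lemma odd_independent_set_card_le_3:
  assumes "finite V" and "symp E" and "\<forall>v\<in>V. card (nbhd V E v) \<le> 3"
    and "diameter_le_two V E" and "odd_independent_set V E S"
  shows "card S \<le> 3"
  using odd_independent_set_eq_nbhd[OF assms] assms(3) by (cases "2 \<le> card S") auto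

lemma strong_odd_coloring_class_odd_independent_set:
  assumes "strong_odd_coloring V E f C"
  shows "odd_independent_set V E {v\<in>V. f v = c}"
proof -
  have proper: "\<And>u v. u \<in> V \<Longrightarrow> v \<in> V \<Longrightarrow> E u v \<Longrightarrow> f u \<noteq> f v"
    and odd: "\<And>v c. v \<in> V \<Longrightarrow> c \<in> f ` nbhd V E v \<Longrightarrow> odd (card {u \<in> nbhd V E v. f u = c})"
    using assms by (auto simp: strong_odd_coloring_def proper_coloring_def)
  have nbhd_inter_class: "nbhd V E v \<inter> {v\<in>V. f v = c} = {u \<in> nbhd V E v. f u = c}" for v
    using nbhd_subset[of V E v] by blast
  show ?thesis
    unfolding odd_independent_set_def independent_set_def nbhd_inter_class
  proof (intro conjI ballI)
    fix v assume "v \<in> V - {v\<in>V. f v = c}"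
    then show "card {u \<in> nbhd V E v. f u = c} = 0 \<or> odd (card {u \<in> nbhd V E v. f u = c})"
      using odd[of v c] by (cases "c \<in> f ` nbhd V E v") (auto simp: card_gt_0_iff)
  qed (auto dest: proper)
qed

lemma card_disjoint_nbhds_le_2:
  assumes diam: "diameter_le_two V E" and "triangle_free V E"
    and nbhds: "\<forall>A\<in>\<A>. A \<noteq> {} \<and> (\<exists>x\<in>V. A = nbhd V E x)"
    and "pairwise disjnt \<A>"
  shows "card \<A> \<le> 2"
proof (rule ccontr)
  have adjacent: "E a b"
    if "a \<in> V" "b \<in> V" "nbhd V E a \<noteq> {}" "disjnt (nbhd V E a) (nbhd V E b)" for a b
    using diam that unfolding diameter_le_two_def disjnt_def by (cases "a = b") auto
  assume "\<not> card \<A> \<le> 2"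
  then obtain \<B> where "\<B> \<subseteq> \<A>" "card \<B> = 3"
    using obtain_subset_with_card_n[of 3 \<A>] by auto
  then obtain A B C where ABC: "{A, B, C} \<subseteq> \<A>" "A \<noteq> B" "B \<noteq> C" "A \<noteq> C"
    by (auto simp: card_3_iff)
  then have "disjnt A B" "disjnt B C" "disjnt A C"
    using \<open>pairwise disjnt \<A>\<close> by (simp_all add: pairwise_def)
  moreover obtain x y z where "x \<in> V" "y \<in> V" "z \<in> V"
    and "A = nbhd V E x" "B = nbhd V E y" "C = nbhd V E z" "A \<noteq> {}" "B \<noteq> {}"
    using nbhds ABC(1) by (metis insert_subset)
  ultimately have "E x y" "E y z" "E x z"
    using adjacent by simp_all
  with \<open>x \<in> V\<close> \<open>y \<in> V\<close> \<open>z \<in> V\<close> \<open>triangle_free V E\<close> show False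
    unfolding triangle_free_def by blast
qed

lemma card_vertices_le_strong_odd_coloring:
  assumes "finite V" and "symp E" and degree: "\<forall>v\<in>V. card (nbhd V E v) \<le> 3"
    and diam: "diameter_le_two V E" and "triangle_free V E"
    and coloring: "strong_odd_coloring V E f C" and "finite C"
  shows "card V \<le> card C + 4"
proof -
  define Cl where "Cl c = {v\<in>V. f v = c}" for c
  define T where "T = {c\<in>C. 2 \<le> card (Cl c)}"
  then have "T \<subseteq> C"
    by blast
  have class_nbhd: "\<exists>x\<in>V. Cl c = nbhd V E x" if "c \<in> T" for c
    using odd_independent_set_eq_nbhd[OF assms(1-4)
        strong_odd_coloring_class_odd_independent_set[OF coloring]] that
    by (auto simp: T_def Cl_def)
  have class_nonempty: "Cl c \<noteq> {}" if "c \<in> T" for c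
    using that by (auto simp: T_def)
  have "card (Cl ` T) \<le> 2"
  proof (rule card_disjoint_nbhds_le_2[OF diam \<open>triangle_free V E\<close>])
    show "\<forall>A\<in>Cl ` T. A \<noteq> {} \<and> (\<exists>x\<in>V. A = nbhd V E x)"
      using class_nbhd class_nonempty by blast
    show "pairwise disjnt (Cl ` T)"
      by (auto simp: pairwise_def disjnt_def Cl_def)
  qed
  moreover have "inj_on Cl T"
    using class_nonempty by (auto simp: inj_on_def Cl_def)
  ultimately have "card T \<le> 2"
    by (simp add: card_image)
  have "card (\<Union>c\<in>C. Cl c) = (\<Sum>c\<in>C. card (Cl c))"
    using \<open>finite V\<close> \<open>finite C\<close> by (intro card_UN_disjoint) (auto simp: Cl_def)
  moreover have "(\<Union>c\<in>C. Cl c) = V"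
    using coloring by (auto simp: strong_odd_coloring_def proper_coloring_def Cl_def)
  ultimately have "card V = (\<Sum>c\<in>C. card (Cl c))"
    by simp
  also have "\<dots> \<le> (\<Sum>c\<in>C. 1 + (if c \<in> T then 2 else 0))"
  proof (rule sum_mono)
    fix c assume "c \<in> C"
    show "card (Cl c) \<le> 1 + (if c \<in> T then 2 else 0)"
      using class_nbhd[of c] degree \<open>c \<in> C\<close> by (auto simp: T_def)
  qed
  also have "\<dots> = card C + 2 * card T"
    using \<open>finite C\<close> \<open>T \<subseteq> C\<close>
    by (simp only: sum.distrib) (simp add: sum.If_cases Int_absorb1)
  finally show ?thesis
    using \<open>card T \<le> 2\<close> by linarith
qed

lemma finite_petersen_V: "finite petersen_V"
  by (simp add: petersen_V_def)

lemma symp_petersen_E: "symp petersen_E"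
  by (auto simp: symp_def petersen_E_def)

lemma petersen_degree: "\<forall>v\<in>petersen_V. card (nbhd petersen_V petersen_E v) = 3"
  by code_simp

lemma petersen_diameter_le_two: "diameter_le_two petersen_V petersen_E"
  by code_simp

lemma petersen_triangle_free: "triangle_free petersen_V petersen_E"
  by code_simp

lemma petersen_odd_independent_set_eq_nbhd:
  assumes "odd_independent_set petersen_V petersen_E S" and "2 \<le> card S"
  shows "\<exists>x\<in>petersen_V. S = nbhd petersen_V petersen_E x"
  using odd_independent_set_eq_nbhd[OF finite_petersen_V symp_petersen_E _
      petersen_diameter_le_two assms] petersen_degree by simp

lemma petersen_alpha_od: "alpha_od petersen_V petersen_E = 3"
proof -
  have "odd_independent_set petersen_V petersen_E (nbhd petersen_V petersen_E 0)"
    by code_simp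
  moreover have "card (nbhd petersen_V petersen_E 0) = 3"
    using petersen_degree by (simp add: petersen_V_def)
  moreover have "card S \<le> 3" if "odd_independent_set petersen_V petersen_E S" for S
    using odd_independent_set_card_le_3[OF finite_petersen_V symp_petersen_E _
        petersen_diameter_le_two that] petersen_degree by simp
  moreover have "finite {S. odd_independent_set petersen_V petersen_E S}"
    by (rule finite_subset[of _ "Pow petersen_V"])
      (auto simp: odd_independent_set_def independent_set_def finite_petersen_V)
  ultimately show ?thesis
    unfolding alpha_od_def by (intro Max_eqI) auto
qed

text \<open>The color classes are \<open>N(0) = {1, 4, 5}\<close>, \<open>N(1) = {0, 2, 6}\<close> and four singletons.\<close>

definition petersen_coloring :: "nat \<Rightarrow> nat" where
  "petersen_coloring v = [1, 0, 1, 2, 0, 0, 1, 3, 4, 5] ! v"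

lemma petersen_strong_odd_coloring:
  "strong_odd_coloring petersen_V petersen_E petersen_coloring {0..<6}"
  by code_simp

lemma petersen_chi_so: "chi_so petersen_V petersen_E = 6"
  unfolding chi_so_def
proof (rule Least_equality)
  show "\<exists>f :: nat \<Rightarrow> nat. strong_odd_coloring petersen_V petersen_E f {0..<6}"
    using petersen_strong_odd_coloring by blast
next
  fix k assume "\<exists>f :: nat \<Rightarrow> nat. strong_odd_coloring petersen_V petersen_E f {0..<k}"
  then obtain f :: "nat \<Rightarrow> nat"
    where coloring: "strong_odd_coloring petersen_V petersen_E f {0..<k}"
    by blast
  have "card petersen_V \<le> card {0..<k} + 4"
    using card_vertices_le_strong_odd_coloring[OF finite_petersen_V symp_petersen_E _
        petersen_diameter_le_two petersen_triangle_free coloring finite_atLeastLessThan]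
      petersen_degree by simp
  then show "6 \<le> k"
    by (simp add: petersen_V_def)
qed

theorem proposition8:
  shows "alpha_od petersen_V petersen_E = 3
    \<and> chi_so petersen_V petersen_E = 6
    \<and> (\<forall>S. odd_independent_set petersen_V petersen_E S \<and> card S \<ge> 2
           \<longrightarrow> (\<exists>v\<in>petersen_V. S = nbhd petersen_V petersen_E v))"
  using petersen_alpha_od petersen_chi_so petersen_odd_independent_set_eq_nbhd by blast

end
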